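(* Let $n\ge2$ and let $r_1,\dots,r_{N(n)}$ be the inflection points of the Hilbert curve $H_n$ (or of any image of $H_n$ under an invertible affine map). Then $\bar\kappa_k=0$ for all $2\le k\le N(n)-2$, and the sequence of first affine curvatures $(\kappa_2,\kappa_3,\dots,\kappa_{N(n)-2})$ equals the number sequence obtained by writing $1$, then the word $K_n$ with each letter replaced by its number string, then $1$. For example, for $n=2$ it is $1,-2,1,\tfrac12,-1,1,-1,2,1,-\tfrac12,1$.
   Context: The Hilbert curve at step $n$ is the polygon $H_n$ in the unit square defined recursively: $H_1$ has vertices $(\tfrac14,\tfrac14),(\tfrac14,\tfrac34),(\tfrac34,\tfrac34),(\tfrac34,\tfrac14)$; $H_{n+1}$ is the concatenation (in this order, joined by the connecting edges) of $f_1(H_n),f_2(H_n),f_3(H_n),f_4(H_n)$, where $f_1(x,y)=(\tfrac y2,\tfrac x2)$, $f_2(x,y)=(\tfrac x2,\tfrac y2+\tfrac12)$, $f_3(x,y)=(\tfrac x2+\tfrac12,\tfrac y2+\tfrac12)$, $f_4(x,y)=(1-\tfrac y2,\tfrac12-\tfrac x2)$, each copy traversed in the order inherited from $H_n$. The inflection points $r_1,\dots,r_{N(n)}$ of $H_n$ are the vertices of $H_n$, in order, after deleting every interior vertex whose two neighbouring vertices are collinear with it (endpoints kept). Affine curvatures: $t_k=r_{k+1}-r_k$, $[a,b]=a_1b_2-a_2b_1$, and for $2\le k\le N-2$ with $[t_{k-1},t_k]\ne0$, $\kappa_k=\dfrac{[t_k,t_{k+1}]}{[t_{k-1},t_k]}$,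 $\bar\kappa_k=\dfrac{[t_{k-1},t_{k+1}]}{[t_{k-1},t_k]}$. Letters and their number strings: $P=(-2,1,\tfrac12,-1,1,-1,2,1,-\tfrac12)$, $S=(2,1,-\tfrac12,1)$, $T=(3,1,\tfrac13)$, $U=(1,-2,1,\tfrac12)$, $V=(1,-1,1,-1,1)$. Words $K_n$ ($n\ge2$) over $\{P,S,T,U,V\}$: $K_2=P$; $K_{2m+1}=K_{2m}\,S\,K_{2m}\,T\,K_{2m}\,U\,K_{2m}$ for $m\ge1$; $K_{2m}=K_{2m-1}\,U\,K_{2m-1}\,V\,K_{2m-1}\,S\,K_{2m-1}$ for $m\ge2$ (so $K_3=PSPTPUP$). *)

theory Defs
  imports Complex_Main
begin

type_synonym pt = "real \<times> real"

definition f1 :: "pt \<Rightarrow> pt" where "f1 p = (snd p / 2, fst p / 2)"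
definition f2 :: "pt \<Rightarrow> pt" where "f2 p = (fst p / 2, snd p / 2 + 1/2)"
definition f3 :: "pt \<Rightarrow> pt" where "f3 p = (fst p / 2 + 1/2, snd p / 2 + 1/2)"
definition f4 :: "pt \<Rightarrow> pt" where "f4 p = (1 - snd p / 2, 1/2 - fst p / 2)"

text \<open>Vertex list of the Hilbert polygon H_n (n >= 1); hilbert 0 is unused.\<close>
fun hilbert :: "nat \<Rightarrow> pt list" where
  "hilbert 0 = []"
| "hilbert (Suc 0) = [(1/4,1/4), (1/4,3/4), (3/4,3/4), (3/4,1/4)]"
| "hilbert (Suc (Suc n)) =
     map f1 (hilbert (Suc n)) @ map f2 (hilbert (Suc n)) @
     map f3 (hilbert (Suc n)) @ map f4 (hilbert (Suc n))"

definition brk :: "pt \<Rightarrow> pt \<Rightarrow> real" where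
  "brk a b = fst a * snd b - snd a * fst b"

definition vsub :: "pt \<Rightarrow> pt \<Rightarrow> pt" where
  "vsub a b = (fst a - fst b, snd a - snd b)"

definition collinear3 :: "pt \<Rightarrow> pt \<Rightarrow> pt \<Rightarrow> bool" where
  "collinear3 a b c \<longleftrightarrow> brk (vsub b a) (vsub c b) = 0"

text \<open>Inflection points: delete every interior vertex collinear with its two
  neighbouring vertices (neighbours taken in the original polygon); endpoints kept.\<close>
definition inflection :: "pt list \<Rightarrow> pt list" where
  "inflection vs = [vs ! i. i \<leftarrow> [0..<length vs],
      i = 0 \<or> i = length vs - 1 \<or> \<not> collinear3 (vs ! (i - 1)) (vs ! i) (vs ! (i + 1))]"

text \<open>1-based indexing: r_k = r ! (k-1); t_k = r_{k+1} - r_k.\<close>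
definition tv :: "pt list \<Rightarrow> nat \<Rightarrow> pt" where
  "tv r k = vsub (r ! k) (r ! (k - 1))"

definition kappa :: "pt list \<Rightarrow> nat \<Rightarrow> real" where
  "kappa r k = brk (tv r k) (tv r (k + 1)) / brk (tv r (k - 1)) (tv r k)"

definition kappabar :: "pt list \<Rightarrow> nat \<Rightarrow> real" where
  "kappabar r k = brk (tv r (k - 1)) (tv r (k + 1)) / brk (tv r (k - 1)) (tv r k)"

definition affmap :: "real \<Rightarrow> real \<Rightarrow> real \<Rightarrow> real \<Rightarrow> real \<Rightarrow> real \<Rightarrow> pt \<Rightarrow> pt" where
  "affmap a11 a12 a21 a22 b1 b2 p =
     (a11 * fst p + a12 * snd p + b1, a21 * fst p + a22 * snd p + b2)"

datatype letter = P | S | T | U | V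

fun numstr :: "letter \<Rightarrow> real list" where
  "numstr P = [-2, 1, 1/2, -1, 1, -1, 2, 1, -1/2]"
| "numstr S = [2, 1, -1/2, 1]"
| "numstr T = [3, 1, 1/3]"
| "numstr U = [1, -2, 1, 1/2]"
| "numstr V = [1, -1, 1, -1, 1]"

text \<open>Words K_n for n >= 2 (K 0, K 1 unused).\<close>
fun K :: "nat \<Rightarrow> letter list" where
  "K 0 = []"
| "K (Suc 0) = []"
| "K (Suc (Suc 0)) = [P]"
| "K (Suc (Suc (Suc m))) =
     (let w = K (Suc (Suc m)) in
      if even m then w @ [S] @ w @ [T] @ w @ [U] @ w
      else w @ [U] @ w @ [V] @ w @ [S] @ w)"

end

theory Submission
  imports Defs
begin

text \<open>Brackets of differences are multiplied by the determinant under an affine map, so both the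
  set of inflection points and all affine curvatures are affine invariants. The curvatures at
  r_k depend only on the window r_(k-1), ..., r_(k+2) of four consecutive inflection points.
  Since H_(n+1) consists of four affine copies of H_n, its curvature sequence consists of four copies
  of that of H_n (some truncated by one term), interleaved with the values of the three windows straddling the
  junctions. These windows are computed from the first and last four inflection points of H_n,
  which have a closed form in terms of the scale 2^(-n) and alternate with the parity of n;
  that alternation is the alternation of the two recursions defining K_n.\<close>

fun turning_vertices :: "pt list \<Rightarrow> pt list" where
  "turning_vertices (a # b # c # rest) =
     (if collinear3 a b c then [] else [b]) @ turning_vertices (b # c # rest)"
| "turning_vertices _ = []"

lemma turning_vertices_conv_filter:
  "turning_vertices vs = map (\<lambda>i. vs ! i)
     (filter (\<lambda>i. \<not> collinear3 (vs ! (i - 1)) (vs ! i) (vs ! (i + 1))) [1..<length vs - 1])"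
proof (induction vs rule: turning_vertices.induct)
  case (1 a b c rest)
  let ?w = "b # c # rest"
  let ?P = "\<lambda>i. \<not> collinear3 ((a # ?w) ! (i - 1)) ((a # ?w) ! i) ((a # ?w) ! (i + 1))"
  let ?Q = "\<lambda>i. \<not> collinear3 (?w ! (i - 1)) (?w ! i) (?w ! (i + 1))"
  have upt: "[1..<length (a # ?w) - 1] = 1 # map Suc [1..<length ?w - 1]"
    by (simp add: upt_conv_Cons map_Suc_upt del: upt_Suc)
  have "filter (?P \<circ> Suc) [1..<length ?w - 1] = filter ?Q [1..<length ?w - 1]"
    by (rule filter_cong) (auto simp: nth_Cons')
  then have shift: "filter ?P (map Suc [1..<length ?w - 1]) = map Suc (filter ?Q [1..<length ?w - 1])"
    by (simp add: filter_map)
  have "map (\<lambda>i. (a # ?w) ! i) (filter ?P [1..<length (a # ?w) - 1])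
     = (if collinear3 a b c then [] else [b]) @ map (\<lambda>i. ?w ! i) (filter ?Q [1..<length ?w - 1])"
    by (simp only: upt filter.simps(2) shift) simp
  then show ?case using 1 by simp
qed auto

lemma inflection_eq_turning_vertices:
  assumes "length vs \<ge> 2"
  shows "inflection vs = hd vs # turning_vertices vs @ [last vs]"
proof -
  let ?L = "length vs"
  let ?Q = "\<lambda>i. \<not> collinear3 (vs ! (i - 1)) (vs ! i) (vs ! (i + 1))"
  obtain m where m: "?L = Suc (Suc m)" using assms by (metis add_2_eq_Suc le_Suc_ex)
  have upt: "[0..<?L] = 0 # [1..<?L - 1] @ [?L - 1]"
  proof -
    have "[0..<Suc (Suc m)] = [0..<Suc m] @ [Suc m]" by (rule upt_Suc_append) simp
    moreover have "[0..<Suc m] = 0 # [Suc 0..<Suc m]" by (rule upt_conv_Cons) simp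
    ultimately show ?thesis unfolding m by simp
  qed
  have inner: "filter (\<lambda>i. i = 0 \<or> i = ?L - 1 \<or> ?Q i) [1..<?L - 1] = filter ?Q [1..<?L - 1]"
    by (rule filter_cong) auto
  have concat_filter: "concat (map (\<lambda>i. if Q i then [f i] else []) xs) = map f (filter Q xs)"
    for Q and f :: "nat \<Rightarrow> pt" and xs by (induction xs) auto
  have "vs \<noteq> []" using assms by auto
  then show ?thesis
    unfolding inflection_def turning_vertices_conv_filter
    by (subst upt) (use m inner in \<open>simp add: hd_conv_nth last_conv_nth concat_filter del: upt_Suc\<close>)
qed

lemma turning_vertices_append:
  assumes "length A \<ge> 2" "length B \<ge> 2"
  shows "turning_vertices (A @ B) = turning_vertices A
     @ (if collinear3 (last (butlast A)) (last A) (hd B) then [] else [last A])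
     @ (if collinear3 (last A) (hd B) (hd (tl B)) then [] else [hd B])
     @ turning_vertices B"
  using assms
proof (induction A rule: turning_vertices.induct)
  case (1 a b c rest)
  then show ?case by (cases rest) auto
next
  case ("2_3" a b)
  then obtain x y B' where "B = x # y # B'"
    by (metis Suc_le_length_iff numeral_2_eq_2)
  then show ?case by simp
qed auto

lemma turning_vertices_map:
  assumes "\<And>a b c. collinear3 (g a) (g b) (g c) = collinear3 a b c"
  shows "turning_vertices (map g vs) = map g (turning_vertices vs)"
  by (induction vs rule: turning_vertices.induct) (auto simp: assms)

lemma inflection_map:
  assumes "\<And>a b c. collinear3 (g a) (g b) (g c) = collinear3 a b c" and "length vs \<ge> 2"
  shows "inflection (map g vs) = map g (inflection vs)"
proof -
  have "vs \<noteq> []" using assms(2) by auto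
  then show ?thesis
    using assms by (simp add: inflection_eq_turning_vertices turning_vertices_map hd_map last_map)
qed

lemma brk_vsub_affmap:
  "brk (vsub (affmap a11 a12 a21 a22 b1 b2 b) (affmap a11 a12 a21 a22 b1 b2 a))
       (vsub (affmap a11 a12 a21 a22 b1 b2 d) (affmap a11 a12 a21 a22 b1 b2 c))
   = (a11 * a22 - a12 * a21) * brk (vsub b a) (vsub d c)"
  unfolding brk_def vsub_def affmap_def by (simp add: algebra_simps)

lemma collinear3_affmap:
  assumes "a11 * a22 - a12 * a21 \<noteq> 0"
  shows "collinear3 (affmap a11 a12 a21 a22 b1 b2 a) (affmap a11 a12 a21 a22 b1 b2 b)
           (affmap a11 a12 a21 a22 b1 b2 c) = collinear3 a b c"
  unfolding collinear3_def brk_vsub_affmap using assms by simp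

lemma f1_eq_affmap: "f1 = affmap 0 (1/2) (1/2) 0 0 0"
  by (auto simp: fun_eq_iff f1_def affmap_def)

lemma f2_eq_affmap: "f2 = affmap (1/2) 0 0 (1/2) 0 (1/2)"
  by (auto simp: fun_eq_iff f2_def affmap_def)

lemma f3_eq_affmap: "f3 = affmap (1/2) 0 0 (1/2) (1/2) (1/2)"
  by (auto simp: fun_eq_iff f3_def affmap_def)

lemma f4_eq_affmap: "f4 = affmap 0 (-1/2) (-1/2) 0 1 (1/2)"
  by (auto simp: fun_eq_iff f4_def affmap_def)

lemmas f_eq_affmap = f1_eq_affmap f2_eq_affmap f3_eq_affmap f4_eq_affmap

lemma turning_vertices_map_f:
  "turning_vertices (map f1 vs) = map f1 (turning_vertices vs)"
  "turning_vertices (map f2 vs) = map f2 (turning_vertices vs)"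
  "turning_vertices (map f3 vs) = map f3 (turning_vertices vs)"
  "turning_vertices (map f4 vs) = map f4 (turning_vertices vs)"
  unfolding f_eq_affmap by (rule turning_vertices_map, rule collinear3_affmap, simp)+

fun windows4 :: "(pt \<Rightarrow> pt \<Rightarrow> pt \<Rightarrow> pt \<Rightarrow> 'b) \<Rightarrow> pt list \<Rightarrow> 'b list" where
  "windows4 F (a # b # c # d # rest) = F a b c d # windows4 F (b # c # d # rest)"
| "windows4 F _ = []"

lemma list_cases4:
  obtains "L = []" | x where "L = [x]" | x y where "L = [x, y]" | x y z where "L = [x, y, z]"
   | x y z u r where "L = x # y # z # u # r"
  by (metis list.exhaust)

lemma windows4_Cons:
  "windows4 F (a # L) = (if length L \<ge> 3 then F a (L!0) (L!1) (L!2) # windows4 F L else [])"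
  by (cases L rule: list_cases4) auto

lemma windows4_short: "length L \<le> 3 \<Longrightarrow> windows4 F L = []"
  by (cases L rule: list_cases4) auto

lemma windows4_conv_map:
  "windows4 F L = map (\<lambda>j. F (L!j) (L!(j+1)) (L!(j+2)) (L!(j+3))) [0..<length L - 3]"
proof (induction F L rule: windows4.induct)
  case (1 F a b c d rest)
  have "[0..<length (a # b # c # d # rest) - 3] = 0 # map Suc [0..<length (b # c # d # rest) - 3]"
    by (simp add: upt_conv_Cons map_Suc_upt del: upt_Suc)
  then show ?case using 1 by simp
qed auto

lemma length_windows4: "length (windows4 F L) = length L - 3"
  by (simp add: windows4_conv_map)

lemma windows4_append_take: "windows4 F (A @ B) = windows4 F (A @ take 3 B) @ windows4 F B"
proof (induction A)
  case Nil
  then show ?case by (simp add: windows4_short)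
next
  case (Cons a A)
  show ?case
  proof (cases "length (A @ B) \<ge> 3")
    case True
    then have "3 \<le> length (A @ take 3 B)" by auto
    moreover have "(A @ B) ! i = (A @ take 3 B) ! i" if "i < 3" for i
      using that by (auto simp: nth_append)
    ultimately show ?thesis using True Cons by (simp only: append_Cons windows4_Cons) auto
  next
    case False
    then have "windows4 F B = []" by (intro windows4_short) auto
    moreover have "\<not> 3 \<le> length (A @ take 3 B)" using False by auto
    ultimately show ?thesis using False by (simp only: append_Cons windows4_Cons) auto
  qed
qed

lemma windows4_append_drop:
  "length A \<ge> 3 \<Longrightarrow> windows4 F (A @ B) = windows4 F A @ windows4 F (drop (length A - 3) A @ B)"
proof (induction A)
  case Nil
  then show ?case by simp
next
  case (Cons a A)
  show ?case
  proof (cases "length A \<ge> 3")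
    case True
    have "(A @ B) ! i = A ! i" if "i < 3" for i using that True by (auto simp: nth_append)
    moreover have "length A - 2 = Suc (length A - 3)" using True by simp
    ultimately show ?thesis using True Cons
      by (simp only: append_Cons windows4_Cons) (auto simp: Suc_diff_le)
  next
    case False
    then have "length A = 2" using Cons.prems by auto
    then show ?thesis by (simp add: windows4_short)
  qed
qed

lemma windows4_append:
  assumes "length A \<ge> 3" "length B \<ge> 3"
  shows "windows4 F (A @ B @ R) =
    windows4 F A @ windows4 F (drop (length A - 3) A @ take 3 B) @ windows4 F (B @ R)"
proof -
  have "windows4 F (A @ B @ R) = windows4 F A @ windows4 F (drop (length A - 3) A @ (B @ R))"
    using windows4_append_drop assms by blast
  also have "windows4 F (drop (length A - 3) A @ (B @ R))
     = windows4 F (drop (length A - 3) A @ take 3 (B @ R)) @ windows4 F (B @ R)"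
    by (rule windows4_append_take)
  also have "take 3 (B @ R) = take 3 B" using assms by simp
  finally show ?thesis by simp
qed

lemma windows4_append4:
  assumes "length B1 \<ge> 3" "length B2 \<ge> 3" "length B3 \<ge> 3" "length B4 \<ge> 3"
  shows "windows4 F (B1 @ B2 @ B3 @ B4) =
       windows4 F B1 @ windows4 F (drop (length B1 - 3) B1 @ take 3 B2)
     @ windows4 F B2 @ windows4 F (drop (length B2 - 3) B2 @ take 3 B3)
     @ windows4 F B3 @ windows4 F (drop (length B3 - 3) B3 @ take 3 B4) @ windows4 F B4"
  using windows4_append[OF assms(1,2), of F "B3 @ B4"] windows4_append[OF assms(2,3), of F B4]
    windows4_append[OF assms(3,4), of F "[]"] by simp

lemma windows4_map:
  "(\<And>a b c d. F (g a) (g b) (g c) (g d) = F a b c d) \<Longrightarrow> windows4 F (map g L) = windows4 F L"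
  by (induction F L rule: windows4.induct) auto

lemma windows4_tl: "windows4 F (tl L) = tl (windows4 F L)"
  by (cases L) (auto simp: windows4_Cons windows4_short)

lemma windows4_butlast: "windows4 F (butlast L) = butlast (windows4 F L)"
proof (induction L)
  case Nil
  then show ?case by simp
next
  case (Cons a L)
  show ?case
  proof (cases "length L \<ge> 4")
    case True
    then have "windows4 F L \<noteq> []" using length_windows4[of F L] by auto
    moreover have "butlast L ! i = L ! i" if "i < 3" for i using that True by (simp add: nth_butlast)
    ultimately show ?thesis using True Cons by (auto simp: windows4_Cons)
  next
    case False
    then show ?thesis by (auto simp: windows4_Cons windows4_short)
  qed
qed

text \<open>On a window r_(k-1), ..., r_(k+2) the first component says [t_(k-1), t_k] \<noteq> 0 and
  kappabar_k = 0; the second component is kappa_k.\<close>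

definition curvature_window :: "pt \<Rightarrow> pt \<Rightarrow> pt \<Rightarrow> pt \<Rightarrow> bool \<times> real" where
  "curvature_window a b c d =
    (brk (vsub b a) (vsub c b) \<noteq> 0 \<and> brk (vsub b a) (vsub d c) = 0,
     brk (vsub c b) (vsub d c) / brk (vsub b a) (vsub c b))"

lemma curvature_window_affmap:
  assumes "a11 * a22 - a12 * a21 \<noteq> 0"
  shows "curvature_window (affmap a11 a12 a21 a22 b1 b2 a) (affmap a11 a12 a21 a22 b1 b2 b)
      (affmap a11 a12 a21 a22 b1 b2 c) (affmap a11 a12 a21 a22 b1 b2 d) = curvature_window a b c d"
  unfolding curvature_window_def brk_vsub_affmap using assms by simp

lemma curvature_windows_affmap:
  assumes "a11 * a22 - a12 * a21 \<noteq> 0"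
  shows "windows4 curvature_window (map (affmap a11 a12 a21 a22 b1 b2) L) = windows4 curvature_window L"
  by (rule windows4_map) (rule curvature_window_affmap[OF assms])

lemma curvature_windows_map_f:
  "windows4 curvature_window (map f1 L) = windows4 curvature_window L"
  "windows4 curvature_window (map f2 L) = windows4 curvature_window L"
  "windows4 curvature_window (map f3 L) = windows4 curvature_window L"
  "windows4 curvature_window (map f4 L) = windows4 curvature_window L"
  unfolding f_eq_affmap by (rule curvature_windows_affmap; simp)+

lemma curvatures_of_windows:
  assumes windows: "windows4 curvature_window r = map (Pair True) xs"
  shows "(\<forall>k. 2 \<le> k \<and> k \<le> length r - 2 \<longrightarrow>
            brk (tv r (k - 1)) (tv r k) \<noteq> 0 \<and> kappabar r k = 0)
       \<and> map (kappa r) [2..<length r - 1] = xs"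
proof -
  let ?N = "length r"
  have len: "length xs = ?N - 3"
    using arg_cong[OF windows, of length] by (simp add: length_windows4)
  have window: "curvature_window (r!j) (r!(j+1)) (r!(j+2)) (r!(j+3)) = (True, xs ! j)"
    if "j < ?N - 3" for j
    using arg_cong[OF windows, of "\<lambda>ws. ws ! j"] that len by (simp add: windows4_conv_map)
  have tv: "tv r (j + 1) = vsub (r!(j+1)) (r!j)" "tv r (j + 2) = vsub (r!(j+2)) (r!(j+1))"
    "tv r (j + 3) = vsub (r!(j+3)) (r!(j+2))" for j
    unfolding tv_def by (simp_all add: numeral_eq_Suc)
  have "brk (tv r (k - 1)) (tv r k) \<noteq> 0 \<and> kappabar r k = 0" if "2 \<le> k" "k \<le> ?N - 2" for k
  proof -
    obtain j where j: "k = j + 2" using \<open>2 \<le> k\<close> by (metis add.commute le_Suc_ex)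
    have shift: "j + 2 - 1 = j + 1" "j + 2 + 1 = j + 3" by simp_all
    have "j < ?N - 3" using that j by linarith
    then show ?thesis
      using window[of j] unfolding kappabar_def j shift tv curvature_window_def by simp
  qed
  moreover have "map (kappa r) [2..<?N - 1] = xs"
  proof (rule nth_equalityI)
    fix i assume "i < length (map (kappa r) [2..<?N - 1])"
    then have i: "i < ?N - 3" by simp
    have "map (kappa r) [2..<?N - 1] ! i = kappa r (i + 2)" using i by (simp add: add.commute)
    also have "\<dots> = snd (curvature_window (r!i) (r!(i+1)) (r!(i+2)) (r!(i+3)))"
    proof -
      have shift: "i + 2 - 1 = i + 1" "i + 2 + 1 = i + 3" by simp_all
      show ?thesis unfolding kappa_def curvature_window_def shift tv by simp
    qed
    finally show "map (kappa r) [2..<?N - 1] ! i = xs ! i" using window[OF i] by simp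
  qed (use len in simp)
  ultimately show ?thesis by blast
qed

lemma hd_map_append: "H \<noteq> [] \<Longrightarrow> hd (map f H @ R) = f (hd H)"
  by (cases H) auto

lemma hd_tl_map_append: "length H \<ge> 2 \<Longrightarrow> hd (tl (map f H @ R)) = f (hd (tl H))"
  by (cases H rule: list_cases4) auto

lemma last_butlast_map: "length H \<ge> 2 \<Longrightarrow> last (butlast (map f H)) = f (last (butlast H))"
  by (cases H rule: rev_cases) (auto intro!: last_map)

lemma last_butlast_append: "length B \<ge> 2 \<Longrightarrow> last (butlast (A @ B)) = last (butlast B)"
  by (cases B rule: rev_cases; cases "butlast B" rule: rev_cases) (auto simp: butlast_append)

lemma hilbert_Suc:
  "n \<ge> 1 \<Longrightarrow> hilbert (Suc n) =
     map f1 (hilbert n) @ map f2 (hilbert n) @ map f3 (hilbert n) @ map f4 (hilbert n)"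
  by (cases n) auto

definition hilbert_scale :: "nat \<Rightarrow> real" where
  "hilbert_scale n = 1 / 2 ^ n"

lemma hilbert_scale_pos: "hilbert_scale n > 0"
  by (simp add: hilbert_scale_def)

definition hilbert_second :: "nat \<Rightarrow> pt" where
  "hilbert_second n = (let h = hilbert_scale n in
     if odd n then (h / 2, 3 * h / 2) else (3 * h / 2, h / 2))"

definition hilbert_penultimate :: "nat \<Rightarrow> pt" where
  "hilbert_penultimate n = (let h = hilbert_scale n in
     if odd n then (1 - h / 2, 3 * h / 2) else (1 - 3 * h / 2, h / 2))"

lemma hilbert_ends:
  assumes "n \<ge> 1"
  shows "length (hilbert n) \<ge> 4
    \<and> hd (hilbert n) = (hilbert_scale n / 2, hilbert_scale n / 2)
    \<and> hd (tl (hilbert n)) = hilbert_second n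
    \<and> last (hilbert n) = (1 - hilbert_scale n / 2, hilbert_scale n / 2)
    \<and> last (butlast (hilbert n)) = hilbert_penultimate n"
  using assms
proof (induction n rule: nat_induct_at_least)
  case base
  then show ?case by (simp add: hilbert_scale_def hilbert_second_def hilbert_penultimate_def)
next
  case (Suc n)
  let ?H = "hilbert n"
  have L: "length ?H \<ge> 4" using Suc by simp
  then have L2: "length ?H \<ge> 2" and ne: "?H \<noteq> []" by auto
  note split = hilbert_Suc[OF \<open>n \<ge> 1\<close>]
  have "hd (hilbert (Suc n)) = f1 (hd ?H)" "hd (tl (hilbert (Suc n))) = f1 (hd (tl ?H))"
    unfolding split by (simp_all only: hd_map_append[OF ne] hd_tl_map_append[OF L2])
  moreover have "last (hilbert (Suc n)) = f4 (last ?H)"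
    "last (butlast (hilbert (Suc n))) = f4 (last (butlast ?H))"
    "length (hilbert (Suc n)) \<ge> 4"
    unfolding split using L2 ne by (simp_all add: last_map last_butlast_append last_butlast_map)
  ultimately
  show ?case using Suc
    by (simp add: hilbert_scale_def hilbert_second_def hilbert_penultimate_def f1_def f4_def
        Let_def field_simps)
qed

definition junction_turns :: "(pt \<Rightarrow> pt) \<Rightarrow> (pt \<Rightarrow> pt) \<Rightarrow> pt list \<Rightarrow> pt list" where
  "junction_turns g g' H =
     (if collinear3 (g (last (butlast H))) (g (last H)) (g' (hd H)) then [] else [g (last H)])
   @ (if collinear3 (g (last H)) (g' (hd H)) (g' (hd (tl H))) then [] else [g' (hd H)])"

lemma turning_vertices_map_append:
  assumes L: "length H \<ge> 2" and g: "turning_vertices (map g H) = map g (turning_vertices H)"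
  shows "turning_vertices (map g H @ map g' H @ R) =
    map g (turning_vertices H) @ junction_turns g g' H @ turning_vertices (map g' H @ R)"
proof -
  have ne: "H \<noteq> []" using L by auto
  have "turning_vertices (map g H @ (map g' H @ R)) = turning_vertices (map g H)
     @ (if collinear3 (last (butlast (map g H))) (last (map g H)) (hd (map g' H @ R)) then []
        else [last (map g H)])
     @ (if collinear3 (last (map g H)) (hd (map g' H @ R)) (hd (tl (map g' H @ R))) then []
        else [hd (map g' H @ R)])
     @ turning_vertices (map g' H @ R)"
    by (rule turning_vertices_append) (use L in auto)
  then show ?thesis
    unfolding junction_turns_def g
    by (simp only: last_butlast_map[OF L] last_map[OF ne] hd_map_append[OF ne]
        hd_tl_map_append[OF L] append_assoc)
qed

lemma inflection_hilbert_Suc_junctions: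
  assumes "n \<ge> 1"
  defines "H \<equiv> hilbert n"
  shows "inflection (hilbert (Suc n)) = f1 (hd H) #
     map f1 (turning_vertices H) @ junction_turns f1 f2 H @
     map f2 (turning_vertices H) @ junction_turns f2 f3 H @
     map f3 (turning_vertices H) @ junction_turns f3 f4 H @
     map f4 (turning_vertices H) @ [f4 (last H)]"
proof -
  have L: "length H \<ge> 2" using hilbert_ends[OF assms(1)] unfolding H_def by simp
  then have ne: "H \<noteq> []" by auto
  have "turning_vertices (map f3 H @ map f4 H @ []) =
      map f3 (turning_vertices H) @ junction_turns f3 f4 H @ map f4 (turning_vertices H)"
    unfolding turning_vertices_map_append[OF L turning_vertices_map_f(3)]
    by (simp add: turning_vertices_map_f)
  then have "turning_vertices (hilbert (Suc n)) =
     map f1 (turning_vertices H) @ junction_turns f1 f2 H @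
     map f2 (turning_vertices H) @ junction_turns f2 f3 H @
     map f3 (turning_vertices H) @ junction_turns f3 f4 H @ map f4 (turning_vertices H)"
    unfolding hilbert_Suc[OF assms(1)] H_def[symmetric]
    by (simp add: turning_vertices_map_append[OF L turning_vertices_map_f(1)]
        turning_vertices_map_append[OF L turning_vertices_map_f(2)])
  moreover have "length (hilbert (Suc n)) \<ge> 2" "hd (hilbert (Suc n)) = f1 (hd H)"
    "last (hilbert (Suc n)) = f4 (last H)"
    unfolding hilbert_Suc[OF assms(1)] H_def[symmetric] using L ne
    by (simp_all add: hd_map_append[OF ne] last_map)
  ultimately show ?thesis by (simp add: inflection_eq_turning_vertices)
qed

lemma junction_turns_hilbert:
  assumes "n \<ge> 1"
  defines "H \<equiv> hilbert n"
  shows "odd n \<Longrightarrow> junction_turns f1 f2 H = [f1 (last H)]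
           \<and> junction_turns f2 f3 H = [f2 (last H), f3 (hd H)]
           \<and> junction_turns f3 f4 H = [f4 (hd H)]"
    and "even n \<Longrightarrow> junction_turns f1 f2 H = [f2 (hd H)]
           \<and> junction_turns f2 f3 H = []
           \<and> junction_turns f3 f4 H = [f3 (last H)]"
  using hilbert_ends[OF assms(1)] hilbert_scale_pos[of n]
  unfolding H_def junction_turns_def
  by (simp_all add: collinear3_def brk_def vsub_def f1_def f2_def f3_def f4_def
      hilbert_second_def hilbert_penultimate_def Let_def field_simps)

lemma inflection_hilbert_Suc:
  assumes "n \<ge> 1"
  defines "C \<equiv> inflection (hilbert n)"
  shows "inflection (hilbert (Suc n)) = (if odd n
     then map f1 C @ map f2 (tl C) @ map f3 (butlast C) @ map f4 C
     else map f1 (butlast C) @ map f2 (butlast C) @ map f3 (tl C) @ map f4 (tl C))"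
proof -
  have "length (hilbert n) \<ge> 2" using hilbert_ends[OF assms(1)] by simp
  then have "C = hd (hilbert n) # turning_vertices (hilbert n) @ [last (hilbert n)]"
    unfolding C_def by (rule inflection_eq_turning_vertices)
  then show ?thesis
    using junction_turns_hilbert[OF assms(1)]
    by (simp add: inflection_hilbert_Suc_junctions[OF assms(1)] butlast_append)
qed

definition inflection_head :: "nat \<Rightarrow> pt list" where
  "inflection_head n = (let h = hilbert_scale n in if odd n
     then [(h/2, h/2), (h/2, 3*h/2), (3*h/2, 3*h/2), (3*h/2, h/2)]
     else [(h/2, h/2), (3*h/2, h/2), (3*h/2, 3*h/2), (h/2, 3*h/2)])"

definition inflection_tail :: "nat \<Rightarrow> pt list" where
  "inflection_tail n = (let h = hilbert_scale n in if odd n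
     then [(1 - 3*h/2, h/2), (1 - 3*h/2, 3*h/2), (1 - h/2, 3*h/2), (1 - h/2, h/2)]
     else [(1 - h/2, 3*h/2), (1 - 3*h/2, 3*h/2), (1 - 3*h/2, h/2), (1 - h/2, h/2)])"

lemma drop_length_minus_tl:
  "length C \<ge> 5 \<Longrightarrow> drop (length C - 5) (tl C) = drop (length C - 4) C"
proof (cases C)
  case (Cons a list)
  assume "length C \<ge> 5"
  then have "length list - 3 = Suc (length list - 4)" using Cons by simp
  then show ?thesis using Cons by simp
qed simp

lemma drop_length_append:
  "length B \<ge> k \<Longrightarrow> drop (length (A @ B) - k) (A @ B) = drop (length B - k) B"
  by simp

lemma inflection_hilbert_ends:
  assumes "n \<ge> 1"
  defines "C \<equiv> inflection (hilbert n)"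
  shows "length C \<ge> 4 * n \<and> take 4 C = inflection_head n
    \<and> drop (length C - 4) C = inflection_tail n"
  using assms(1) unfolding C_def
proof (induction n rule: nat_induct_at_least)
  case base
  have "inflection (hilbert 1) = hilbert 1"
    by (simp add: inflection_eq_turning_vertices collinear3_def brk_def vsub_def)
  then show ?case by (simp add: inflection_head_def inflection_tail_def hilbert_scale_def)
next
  case (Suc n)
  let ?C = "inflection (hilbert n)"
  have L: "length ?C \<ge> 4 * n" and T: "take 4 ?C = inflection_head n"
    and D: "drop (length ?C - 4) ?C = inflection_tail n"
    using Suc by auto
  have L5: "length ?C \<ge> 5" if "even n"
    using L Suc(1) that by (cases "n = 1") auto
  have ends: "length (inflection (hilbert (Suc n))) \<ge> 4 * Suc n
    \<and> take 4 (inflection (hilbert (Suc n))) = map f1 (inflection_head n)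
    \<and> drop (length (inflection (hilbert (Suc n))) - 4) (inflection (hilbert (Suc n)))
        = map f4 (inflection_tail n)"
  proof (cases "odd n")
    case True
    then show ?thesis unfolding inflection_hilbert_Suc[OF Suc(1)] T[symmetric] D[symmetric]
      using L Suc(1) by (simp add: take_map drop_map)
  next
    case False
    have "drop (length (tl ?C) - 4) (tl ?C) = inflection_tail n"
      using drop_length_minus_tl[of ?C] L5 False D by (simp add: numeral_eq_Suc)
    then show ?thesis unfolding inflection_hilbert_Suc[OF Suc(1)] T[symmetric]
      using L L5 False
      by (simp only: if_False drop_length_append length_map length_tl)
        (simp add: take_map drop_map take_butlast)
  qed
  then show ?case using hilbert_scale_def[of n] hilbert_scale_def[of "Suc n"]
    by (simp add: inflection_head_def inflection_tail_def f1_def f4_def Let_def field_simps)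
qed

lemma ends3_tl_butlast:
  assumes L: "length C \<ge> 5" and "take 4 C = F" and "drop (length C - 4) C = D"
  shows "take 3 C = butlast F" "take 3 (tl C) = tl F" "take 3 (butlast C) = butlast F"
    "drop (length C - 3) C = tl D" "drop (length (tl C) - 3) (tl C) = tl D"
    "drop (length (butlast C) - 3) (butlast C) = butlast D"
proof -
  obtain a b c d M where M: "C = [a, b, c, d] @ M"
    using L by (cases C rule: list_cases4) (auto simp: numeral_eq_Suc)
  obtain M' a' b' c' d' where M': "C = M' @ [a', b', c', d']"
  proof -
    have "length (drop (length C - 4) C) = 4" using L by simp
    then obtain a' b' c' d' where "drop (length C - 4) C = [a', b', c', d']"
      by (cases "drop (length C - 4) C" rule: list_cases4) auto
    then show ?thesis using that[of "take (length C - 4) C"] by (metis append_take_drop_id)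
  qed
  have F: "F = [a, b, c, d]" using assms(2) M by simp
  have D: "D = [a', b', c', d']" using assms(3) M' by simp
  show "take 3 C = butlast F" "take 3 (tl C) = tl F" using M F by simp_all
  show "take 3 (butlast C) = butlast F"
    using M F L by (cases M rule: rev_cases) (auto simp: butlast_append)
  show "drop (length C - 3) C = tl D" "drop (length (butlast C) - 3) (butlast C) = butlast D"
    using M' D by (simp_all add: butlast_append)
  show "drop (length (tl C) - 3) (tl C) = tl D" using M' D L by (cases M') auto
qed

lemma junction_windows_odd:
  assumes "odd n"
  shows
    "windows4 curvature_window (map f1 (tl (inflection_tail n)) @ map f2 (tl (inflection_head n)))
       = map (Pair True) [-2, 1, 1/2]"
    "windows4 curvature_window
       (map f2 (tl (inflection_tail n)) @ map f3 (butlast (inflection_head n)))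
       = map (Pair True) [-1, 1, -1]"
    "windows4 curvature_window
       (map f3 (butlast (inflection_tail n)) @ map f4 (butlast (inflection_head n)))
       = map (Pair True) [2, 1, -1/2]"
  using assms hilbert_scale_pos[of n]
  by (simp_all add: inflection_head_def inflection_tail_def Let_def curvature_window_def brk_def
      vsub_def f1_def f2_def f3_def f4_def field_simps)

lemma junction_windows_even:
  assumes "even n"
  shows
    "windows4 curvature_window
       (map f1 (butlast (inflection_tail n)) @ map f2 (butlast (inflection_head n)))
       = map (Pair True) [2, 1, -1/2]"
    "windows4 curvature_window
       (map f2 (butlast (inflection_tail n)) @ map f3 (tl (inflection_head n)))
       = map (Pair True) [3, 1, 1/3]"
    "windows4 curvature_window (map f3 (tl (inflection_tail n)) @ map f4 (tl (inflection_head n)))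
       = map (Pair True) [-2, 1, 1/2]"
  using assms hilbert_scale_pos[of n]
  by (simp_all add: inflection_head_def inflection_tail_def Let_def curvature_window_def brk_def
      vsub_def f1_def f2_def f3_def f4_def field_simps)

lemma K_Suc:
  assumes "n \<ge> 2"
  shows "K (Suc n) = (if odd n then K n @ [U] @ K n @ [V] @ K n @ [S] @ K n
                      else K n @ [S] @ K n @ [T] @ K n @ [U] @ K n)"
proof -
  obtain m where "n = Suc (Suc m)" using assms by (metis add_2_eq_Suc le_Suc_ex)
  then show ?thesis by (simp add: Let_def)
qed

lemma curvature_windows_hilbert_Suc:
  assumes n2: "n \<ge> 2"
    and IH: "windows4 curvature_window (inflection (hilbert n))
               = map (Pair True) ([1] @ concat (map numstr (K n)) @ [1])"
  shows "windows4 curvature_window (inflection (hilbert (Suc n)))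
               = map (Pair True) ([1] @ concat (map numstr (K (Suc n))) @ [1])"
proof -
  let ?C = "inflection (hilbert n)"
  let ?k = "concat (map numstr (K n))"
  have n1: "n \<ge> 1" using n2 by simp
  note ends = inflection_hilbert_ends[OF n1]
  have L: "length ?C \<ge> 8" using ends n2 by linarith
  note ends3 = ends3_tl_butlast[of ?C "inflection_head n" "inflection_tail n"]
  have ends3': "drop (length ?C - 4) (tl ?C) = tl (inflection_tail n)"
    "drop (length ?C - 4) (butlast ?C) = butlast (inflection_tail n)"
    using ends3(5,6) ends L by (simp_all add: numeral_eq_Suc)
  have tl: "windows4 curvature_window (tl ?C) = map (Pair True) (?k @ [1])"
    using IH by (simp add: windows4_tl map_tl)
  have butlast: "windows4 curvature_window (butlast ?C) = map (Pair True) ([1] @ ?k)"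
    using IH by (simp add: windows4_butlast map_butlast)
  show ?thesis
  proof (cases "odd n")
    case True
    then have "inflection (hilbert (Suc n)) =
       map f1 ?C @ map f2 (tl ?C) @ map f3 (butlast ?C) @ map f4 ?C"
      using inflection_hilbert_Suc[OF n1] by simp
    then show ?thesis
      using L ends ends3 ends3' True
      by (simp add: windows4_append4 drop_map take_map curvature_windows_map_f
          junction_windows_odd tl butlast IH K_Suc[OF n2])
  next
    case False
    then have "inflection (hilbert (Suc n)) =
       map f1 (butlast ?C) @ map f2 (butlast ?C) @ map f3 (tl ?C) @ map f4 (tl ?C)"
      using inflection_hilbert_Suc[OF n1] by simp
    then show ?thesis
      using L ends ends3 ends3' False
      by (simp add: windows4_append4 drop_map take_map curvature_windows_map_f
          junction_windows_even tl butlast IH K_Suc[OF n2])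
  qed
qed

lemma curvature_windows_hilbert:
  "n \<ge> 2 \<Longrightarrow> windows4 curvature_window (inflection (hilbert n))
               = map (Pair True) ([1] @ concat (map numstr (K n)) @ [1])"
proof (induction n rule: nat_induct_at_least)
  case base
  have "inflection (hilbert 1) = hilbert 1"
    by (simp add: inflection_eq_turning_vertices collinear3_def brk_def vsub_def)
  then have "inflection (hilbert 2) = map f1 (hilbert 1) @ map f2 (tl (hilbert 1))
        @ map f3 (butlast (hilbert 1)) @ map f4 (hilbert 1)"
    using inflection_hilbert_Suc[of 1] by (simp add: numeral_2_eq_2)
  then show ?case
    by (simp add: numeral_2_eq_2 curvature_window_def brk_def vsub_def f1_def f2_def f3_def f4_def)
next
  case (Suc n)
  then show ?case using curvature_windows_hilbert_Suc by blast
qed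

theorem mainTheorem10:
  fixes n :: nat and a11 a12 a21 a22 b1 b2 :: real
  assumes "n \<ge> 2" and "a11 * a22 - a12 * a21 \<noteq> 0"
  shows "let r = inflection (map (affmap a11 a12 a21 a22 b1 b2) (hilbert n));
             N = length r
         in (\<forall>k. 2 \<le> k \<and> k \<le> N - 2 \<longrightarrow>
                 brk (tv r (k - 1)) (tv r k) \<noteq> 0 \<and> kappabar r k = 0)
          \<and> map (kappa r) [2..<N - 1] = [1] @ concat (map numstr (K n)) @ [1]"
proof -
  let ?A = "affmap a11 a12 a21 a22 b1 b2"
  have "length (hilbert n) \<ge> 2" using hilbert_ends[of n] assms(1) by simp
  then have "inflection (map ?A (hilbert n)) = map ?A (inflection (hilbert n))"
    by (intro inflection_map collinear3_affmap assms(2))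
  then have "windows4 curvature_window (inflection (map ?A (hilbert n)))
      = map (Pair True) ([1] @ concat (map numstr (K n)) @ [1])"
    by (simp add: curvature_windows_affmap[OF assms(2)] curvature_windows_hilbert[OF assms(1)])
  then show ?thesis unfolding Let_def by (rule curvatures_of_windows)
qed

end
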